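(* Let $E$ be a finite-dimensional real Euclidean space with translation space $V$ and let $\Phi_{\mathrm{aff}}$ be an affine root system on $E$. Let $J'\subset\Phi_{\mathrm{aff}}$ be such that $DJ'=\{Da\mid a\in J'\}$ is linearly independent (not assumed to lie in a basis of $\Phi_{\mathrm{aff}}$). Suppose there exists a basis $B_{J'}$ of the affine root system $(\Phi_{\mathrm{aff}})_{J'}$ on $E_{J'}$ containing $J'$. Then there exists a basis $B'$ of $\Phi_{\mathrm{aff}}$ containing $J'$.
   Context: Affine root systems are in the sense of Macdonald. For an affine root $a$, $Da\in V^*$ is its gradient: $a(x+v)=a(x)+(Da)(v)$. Set $V^{J'}=\{v\in V\mid\alpha(v)=0\ \forall\alpha\in DJ'\}$, $E_{J'}=E/V^{J'}$ with the Euclidean structure transported from $(V^{J'})^\perp\cong V/V^{J'}$, and $(\Phi_{\mathrm{aff}})_{J'}=\{a\in\Phi_{\mathrm{aff}}\mid Da\in\mathbb R\cdot DJ'\}$, viewed as an affine root system on $E_{J'}$. *)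

theory Defs
  imports "HOL-Analysis.Analysis"
begin

text \<open>The Euclidean affine space E is modelled by a Euclidean
vector space type 'v (after choosing an origin), which is also its translation
space V.  Dual vectors are identified with vectors via the inner product.
An affine function on a linear subspace W of 'v is represented by a pair
(u, c) with u in W, standing for x \<mapsto> u \<bullet> x + c; its gradient is u.\<close>

type_synonym 'v afun = "'v \<times> real"

definition aff :: "'v::euclidean_space afun \<Rightarrow> 'v \<Rightarrow> real" where
  "aff a x = fst a \<bullet> x + snd a"

definition grad :: "'v::euclidean_space afun \<Rightarrow> 'v" where
  "grad a = fst a"

definition aff_funs :: "'v::euclidean_space set \<Rightarrow> 'v afun set" where
  "aff_funs W = {a. grad a \<in> W}"

definition hyp :: "'v::euclidean_space set \<Rightarrow> 'v afun \<Rightarrow> 'v set" where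
  "hyp W a = {x \<in> W. aff a x = 0}"

text \<open>Orthogonal reflection of W in the hyperplane of a:
  s_a(x) = x - a(x) Da^vee, with Da^vee = 2 Da / |Da|^2.\<close>
definition refl_pt :: "'v::euclidean_space afun \<Rightarrow> 'v \<Rightarrow> 'v" where
  "refl_pt a x = x - (aff a x * (2 / (grad a \<bullet> grad a))) *\<^sub>R grad a"

inductive_set weyl_group :: "'v::euclidean_space afun set \<Rightarrow> ('v \<Rightarrow> 'v) set"
  for S where
  weyl_id: "id \<in> weyl_group S"
| weyl_step: "w \<in> weyl_group S \<Longrightarrow> a \<in> S \<Longrightarrow> refl_pt a \<circ> w \<in> weyl_group S"

text \<open>Affine root system on the Euclidean (affine) space W in the sense of
Macdonald: (AR1) S spans F and consists of non-constant functions;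
(AR2) s_a(S) = S; (AR3) <a^vee, b> integral; (AR4) the Weyl group acts
properly on W.  The action of s_a on functions is b \<mapsto> b \<circ> s_a.\<close>
definition affine_root_system :: "'v::euclidean_space set \<Rightarrow> 'v afun set \<Rightarrow> bool" where
  "affine_root_system W S \<longleftrightarrow>
     subspace W \<and>
     S \<subseteq> aff_funs W \<and>
     span S = aff_funs W \<and>
     (\<forall>a\<in>S. grad a \<noteq> 0) \<and>
     (\<forall>a\<in>S. \<forall>b\<in>S. \<exists>b'\<in>S. \<forall>x\<in>W. aff b' x = aff b (refl_pt a x)) \<and>
     (\<forall>a\<in>S. \<forall>b\<in>S. 2 * (grad a \<bullet> grad b) / (grad a \<bullet> grad a) \<in> \<int>) \<and>
     (\<forall>K. compact K \<and> K \<subseteq> W \<longrightarrow>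
        finite {w \<in> weyl_group S. w ` K \<inter> K \<noteq> {}})"

definition alcoves :: "'v::euclidean_space set \<Rightarrow> 'v afun set \<Rightarrow> 'v set set" where
  "alcoves W S = components (W - (\<Union>a\<in>S. hyp W a))"

definition is_wall :: "'v::euclidean_space set \<Rightarrow> 'v afun \<Rightarrow> 'v set \<Rightarrow> bool" where
  "is_wall W a C \<longleftrightarrow> affine hull (hyp W a \<inter> closure C) = hyp W a"

definition basis_of_alcove :: "'v::euclidean_space set \<Rightarrow> 'v afun set \<Rightarrow> 'v set \<Rightarrow> 'v afun set" where
  "basis_of_alcove W S C =
     {a \<in> S. (1/2) *\<^sub>R a \<notin> S \<and> is_wall W a C \<and> (\<forall>x\<in>C. aff a x > 0)}"

definition is_basis :: "'v::euclidean_space set \<Rightarrow> 'v afun set \<Rightarrow> 'v afun set \<Rightarrow> bool" where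
  "is_basis W S B \<longleftrightarrow> (\<exists>C \<in> alcoves W S. B = basis_of_alcove W S C)"

text \<open>For J' with linearly independent gradients: E_{J'} = E / V^{J'} is
identified isometrically with (V^{J'})^\<bottom> = span DJ' (orthogonal projection),
and (Phi_aff)_{J'} consists of the roots with gradient in span DJ'; these are
constant along V^{J'} and are represented by the same pairs.\<close>
definition sub_space :: "'v::euclidean_space afun set \<Rightarrow> 'v set" where
  "sub_space J = span (grad ` J)"

definition sub_system :: "'v::euclidean_space afun set \<Rightarrow> 'v afun set \<Rightarrow> 'v afun set" where
  "sub_system Phi J = {a \<in> Phi. grad a \<in> span (grad ` J)}"

end

theory Submission
  imports Defs
begin

text \<open>Let W = span DJ', let C be the alcove of the subsystem whose basis contains J', and let y be
the point of W where all roots of J' vanish.  If two roots a, b of the subsystem each vanish at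
a point of the closure of C where the other is positive, then Da \<bullet> Db \<le> 0: otherwise the
reflected root s_a(b) = b - k a with k > 0 changes sign on C.  Applied at the walls of C this
shows that DJ' is an obtuse basis of W, and hence that a root of the subsystem which is
positive on C and vanishes at a point of the closure of C inside the cone {a > 0 | a \<in> J'} is
positive at y.  So near y the cone meets no hyperplane of the subsystem.  By local finiteness
(AR4) only finitely many other roots vanish near y, and their gradients are not in W; moving y
slightly orthogonally to W off their hyperplanes gives a point y' at which the cone, cut down
to a small ball around y', meets no root hyperplane at all.  It lies in one alcove of the whole
system, whose walls include the hyperplanes of J'.\<close>

lemma aff_refl_pt:
  "aff b (refl_pt a x) = aff b x - aff a x * (2 * (fst a \<bullet> fst b) / (fst a \<bullet> fst a))"
  by (simp add: refl_pt_def aff_def grad_def inner_diff_right inner_commute algebra_simps)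

lemma aff_convex_comb: "aff b ((1 - t) *\<^sub>R u + t *\<^sub>R v) = (1 - t) * aff b u + t * aff b v"
  by (simp add: aff_def inner_add_right algebra_simps)

lemma afun_eqI:
  assumes "\<And>x. aff p x = u \<bullet> x + c"
  shows "p = (u, c)"
proof -
  have c: "snd p = c" using assms[of 0] by (simp add: aff_def)
  have "aff p (fst p - u) = u \<bullet> (fst p - u) + c" by (rule assms)
  hence "(fst p - u) \<bullet> (fst p - u) = 0"
    using c by (simp add: aff_def inner_diff_left inner_diff_right inner_commute)
  thus ?thesis using c by (simp add: prod_eq_iff)
qed

lemma refl_pt_fixed_iff: "fst a \<noteq> 0 \<Longrightarrow> refl_pt a x = x \<longleftrightarrow> aff a x = 0"
  by (simp add: refl_pt_def grad_def)

lemma aff_proportional_if_zeros_subset: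
  fixes a b :: "'v::euclidean_space afun"
  assumes W: "subspace W" and aW: "fst a \<in> W" and bW: "fst b \<in> W" and a0: "fst a \<noteq> 0"
    and zeros: "\<And>x. x \<in> W \<Longrightarrow> aff a x = 0 \<Longrightarrow> aff b x = 0"
  shows "\<exists>l. \<forall>x\<in>W. aff b x = l * aff a x"
proof -
  define n where "n = fst a \<bullet> fst a"
  have n0: "n > 0" using a0 by (simp add: n_def)
  define p0 where "p0 = (- snd a / n) *\<^sub>R fst a"
  have p0W: "p0 \<in> W" using W aW by (simp add: p0_def subspace_scale subspace_neg)
  have ap0: "aff a p0 = 0" using n0 by (simp add: p0_def aff_def n_def)
  hence bp0: "aff b p0 = 0" using zeros p0W by blast
  show ?thesis
  proof (intro exI ballI)
    fix x assume xW: "x \<in> W"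
    define v where "v = x - p0 - (aff a x / n) *\<^sub>R fst a"
    have vW: "v \<in> W" unfolding v_def using W xW p0W aW by (simp add: subspace_diff subspace_scale)
    have "fst a \<bullet> v = 0" using n0 ap0 unfolding v_def by (simp add: inner_diff_right aff_def n_def)
    hence "aff a (p0 + v) = 0" using ap0 by (simp add: aff_def inner_add_right)
    hence "aff b (p0 + v) = 0" using zeros W p0W vW subspace_add by blast
    hence bv: "fst b \<bullet> v = 0" using bp0 by (simp add: aff_def inner_add_right)
    have "aff b x = aff b (p0 + v + (aff a x / n) *\<^sub>R fst a)" by (simp add: v_def)
    also have "\<dots> = (aff a x / n) * (fst b \<bullet> fst a)" using bv bp0
      by (simp add: aff_def inner_add_right algebra_simps)
    finally show "aff b x = ((fst b \<bullet> fst a) / n) * aff a x" by simp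
  qed
qed

lemma grad_eq_0_if_aff_zero_on_subspace:
  assumes "subspace W" "fst b \<in> W" "\<And>x. x \<in> W \<Longrightarrow> aff b x = 0"
  shows "fst b = 0"
proof -
  have "snd b = 0" using assms(3)[of 0] subspace_0[OF assms(1)] by (simp add: aff_def)
  thus ?thesis using assms(3)[OF assms(2)] by (simp add: aff_def)
qed

lemma aff_zero_in_connected:
  assumes "connected S" "x \<in> S" "x' \<in> S" "aff b x \<le> 0" "aff b x' \<ge> 0"
  obtains z where "z \<in> S" "aff b z = 0"
proof -
  have "\<exists>z\<in>S. fst b \<bullet> z = - snd b"
    by (rule connected_ivt_hyperplane[OF assms(1-3)]) (use assms(4,5) in \<open>auto simp: aff_def\<close>)
  thus ?thesis using that by (auto simp: aff_def)
qed

lemma aff_pos_on_connected: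
  assumes "connected S" "x0 \<in> S" "aff b x0 > 0" "\<And>x. x \<in> S \<Longrightarrow> aff b x \<noteq> 0" "x \<in> S"
  shows "aff b x > 0"
proof (rule ccontr)
  assume "\<not> aff b x > 0"
  then obtain z where "z \<in> S" "aff b z = 0"
    using aff_zero_in_connected[OF assms(1) assms(5) assms(2), of b] assms(3) by force
  thus False using assms(4) by blast
qed

lemma aff_nonneg_on_closure:
  assumes "\<And>x. x \<in> C \<Longrightarrow> aff b x > 0" "p \<in> closure C"
  shows "aff b p \<ge> 0"
proof -
  have "C \<subseteq> {x. fst b \<bullet> x \<ge> - snd b}" using assms(1) by (force simp: aff_def)
  hence "closure C \<subseteq> {x. fst b \<bullet> x \<ge> - snd b}"
    by (rule closure_minimal) (rule closed_halfspace_ge)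
  thus ?thesis using assms(2) by (force simp: aff_def)
qed

lemma exists_aff_pos_near_closure:
  assumes "p \<in> closure C" "aff b p > 0"
  obtains x where "x \<in> C" "aff b x > 0"
proof -
  have "p \<in> {x. fst b \<bullet> x > - snd b} \<inter> closure C" using assms by (auto simp: aff_def)
  hence "{x. fst b \<bullet> x > - snd b} \<inter> C \<noteq> {}"
    using open_Int_closure_eq_empty[OF open_halfspace_gt] by blast
  thus ?thesis using that by (force simp: aff_def)
qed

lemma exists_aff_neg_near_closure:
  assumes "p \<in> closure C" "aff b p < 0"
  obtains x where "x \<in> C" "aff b x < 0"
proof -
  have "p \<in> {x. fst b \<bullet> x < - snd b} \<inter> closure C" using assms by (auto simp: aff_def)
  hence "{x. fst b \<bullet> x < - snd b} \<inter> C \<noteq> {}"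
    using open_Int_closure_eq_empty[OF open_halfspace_lt] by blast
  thus ?thesis using that by (force simp: aff_def)
qed

lemma exists_pos_mult_norm_less:
  fixes u :: "'v::real_normed_vector"
  assumes "0 < \<delta>"
  obtains s where "s > 0" "s * norm u < \<delta>"
proof
  have p: "0 < norm u + 1" by (simp add: add_nonneg_pos)
  show "\<delta> / (norm u + 1) > 0" using assms p by simp
  have "\<delta> / (norm u + 1) * norm u < \<delta> / (norm u + 1) * (norm u + 1)"
    using assms p by (intro mult_strict_left_mono) auto
  also have "\<dots> = \<delta>" using p by simp
  finally show "\<delta> / (norm u + 1) * norm u < \<delta>" .
qed

lemma aff_nonzero_near:
  assumes "finite F" "\<And>b. b \<in> F \<Longrightarrow> aff b y \<noteq> 0"
  obtains \<delta> where "\<delta> > 0" "\<And>x b. dist x y < \<delta> \<Longrightarrow> b \<in> F \<Longrightarrow> aff b x \<noteq> 0"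
proof -
  have "\<forall>b\<in>F. eventually (\<lambda>x. aff b x \<noteq> 0) (nhds y)"
  proof
    fix b assume "b \<in> F"
    have "open {x. aff b x \<noteq> 0}" unfolding aff_def by (intro open_Collect_neq continuous_intros)
    thus "eventually (\<lambda>x. aff b x \<noteq> 0) (nhds y)"
      unfolding eventually_nhds using \<open>b \<in> F\<close> assms(2) by blast
  qed
  hence "eventually (\<lambda>x. \<forall>b\<in>F. aff b x \<noteq> 0) (nhds y)" by (rule eventually_ball_finite[OF assms(1)])
  thus ?thesis using that unfolding eventually_nhds_metric by blast
qed

lemma independent_exists_dual_vector:
  fixes G :: "'v::euclidean_space set"
  assumes ind: "independent G" and g: "g \<in> G"
  obtains q where "q \<in> span G" "g \<bullet> q = 1" "\<And>h. h \<in> G \<Longrightarrow> h \<noteq> g \<Longrightarrow> h \<bullet> q = 0"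
proof -
  obtain p q where p: "p \<in> span (G - {g})" and q: "\<And>w. w \<in> span (G - {g}) \<Longrightarrow> orthogonal q w"
    and pq: "g = p + q"
    using orthogonal_subspace_decomp_exists by blast
  have "q \<noteq> 0"
  proof
    assume "q = 0"
    hence "g \<in> span (G - {g})" using p pq by simp
    thus False using ind g dependent_def by blast
  qed
  have "p \<bullet> q = 0" using q[OF p] by (simp add: orthogonal_def inner_commute)
  hence gq: "g \<bullet> q = q \<bullet> q" by (simp add: pq inner_add_left)
  have "q = g - p" using pq by simp
  moreover have "p \<in> span G" using p span_mono[of "G - {g}" G] by blast
  ultimately have "q \<in> span G" using g by (simp add: span_diff span_base)
  show ?thesis
  proof
    show "(1 / (q \<bullet> q)) *\<^sub>R q \<in> span G" using \<open>q \<in> span G\<close> by (simp add: span_mul)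
    show "g \<bullet> (1 / (q \<bullet> q)) *\<^sub>R q = 1" using gq \<open>q \<noteq> 0\<close> by simp
    fix h assume "h \<in> G" "h \<noteq> g"
    hence "orthogonal q h" by (intro q span_base) auto
    thus "h \<bullet> (1 / (q \<bullet> q)) *\<^sub>R q = 0" by (simp add: orthogonal_def inner_commute)
  qed
qed

lemma independent_exists_inner_eq:
  fixes G :: "'v::euclidean_space set"
  assumes ind: "independent G"
  obtains u where "u \<in> span G" "\<And>g. g \<in> G \<Longrightarrow> g \<bullet> u = c g"
proof -
  have "\<forall>g\<in>G. \<exists>q. q \<in> span G \<and> g \<bullet> q = 1 \<and> (\<forall>h\<in>G. h \<noteq> g \<longrightarrow> h \<bullet> q = 0)"
  proof
    fix g assume g: "g \<in> G"
    obtain q where "q \<in> span G" "g \<bullet> q = 1" "\<And>h. h \<in> G \<Longrightarrow> h \<noteq> g \<Longrightarrow> h \<bullet> q = 0"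
      using independent_exists_dual_vector[OF ind g] by blast
    thus "\<exists>q. q \<in> span G \<and> g \<bullet> q = 1 \<and> (\<forall>h\<in>G. h \<noteq> g \<longrightarrow> h \<bullet> q = 0)" by blast
  qed
  then obtain q where q: "\<forall>g\<in>G. q g \<in> span G \<and> g \<bullet> q g = 1 \<and> (\<forall>h\<in>G. h \<noteq> g \<longrightarrow> h \<bullet> q g = 0)"
    by (rule bchoice[THEN exE])
  have fin: "finite G" using ind by (rule finiteI_independent)
  show ?thesis
  proof
    show "(\<Sum>g\<in>G. c g *\<^sub>R q g) \<in> span G" using q by (intro span_sum span_mul) blast
    fix h assume h: "h \<in> G"
    have "h \<bullet> (\<Sum>g\<in>G. c g *\<^sub>R q g) = (\<Sum>g\<in>G. if g = h then c g else 0)"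
      unfolding inner_sum_right inner_scaleR_right using q h by (intro sum.cong) auto
    also have "\<dots> = c h" using fin h by simp
    finally show "h \<bullet> (\<Sum>g\<in>G. c g *\<^sub>R q g) = c h" .
  qed
qed

lemma exists_inner_grad_eq:
  fixes J :: "'v::euclidean_space afun set"
  assumes "inj_on grad J" "independent (grad ` J)"
  obtains u where "u \<in> span (grad ` J)" "\<And>a. a \<in> J \<Longrightarrow> fst a \<bullet> u = c a"
proof -
  obtain u where u: "u \<in> span (grad ` J)" "\<And>g. g \<in> grad ` J \<Longrightarrow> g \<bullet> u = c (inv_into J grad g)"
    using independent_exists_inner_eq[OF assms(2), where c = "\<lambda>g. c (inv_into J grad g)"] by blast
  show ?thesis
  proof (rule that[OF u(1)])
    fix a assume a: "a \<in> J"
    have "grad a \<bullet> u = c (inv_into J grad (grad a))" using a by (intro u(2) imageI)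
    also have "inv_into J grad (grad a) = a" using assms(1) a by (rule inv_into_f_f)
    finally show "fst a \<bullet> u = c a" by (simp only: grad_def)
  qed
qed

lemma independent_obtuse_nonpos_coeffs:
  fixes G :: "'v::euclidean_space set"
  assumes ind: "independent G" and obtuse: "\<And>g h. g \<in> G \<Longrightarrow> h \<in> G \<Longrightarrow> g \<noteq> h \<Longrightarrow> g \<bullet> h \<le> 0"
    and v: "v \<in> span G" and v_obtuse: "\<And>g. g \<in> G \<Longrightarrow> g \<bullet> v \<le> 0"
  obtains n where "\<And>g. g \<in> G \<Longrightarrow> n g \<le> 0" "v = (\<Sum>g\<in>G. n g *\<^sub>R g)"
proof -
  have fin: "finite G" using ind by (rule finiteI_independent)
  obtain n where n: "v = (\<Sum>g\<in>G. n g *\<^sub>R g)" using v span_finite[OF fin] by auto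
  define np where "np g = max (n g) 0" for g
  define nm where "nm g = max (- n g) 0" for g
  define vp where "vp = (\<Sum>g\<in>G. np g *\<^sub>R g)"
  define vm where "vm = (\<Sum>g\<in>G. nm g *\<^sub>R g)"
  have "v = (\<Sum>g\<in>G. np g *\<^sub>R g - nm g *\<^sub>R g)"
    unfolding n by (rule sum.cong) (auto simp: np_def nm_def max_def algebra_simps)
  hence vv: "v = vp - vm" by (simp add: vp_def vm_def sum_subtractf)
  \<comment> \<open>vp \<bullet> vp = vp \<bullet> v + vp \<bullet> vm \<le> 0, as np and nm have disjoint supports\<close>
  have "vp \<bullet> vp = (\<Sum>g\<in>G. np g * (g \<bullet> vp))"
    by (simp add: vp_def inner_sum_left)
  also have "\<dots> = (\<Sum>g\<in>G. np g * (g \<bullet> v) + (\<Sum>h\<in>G. np g * nm h * (g \<bullet> h)))"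
    using vv by (intro sum.cong) (auto simp: vm_def inner_sum_right algebra_simps sum_distrib_left)
  also have "\<dots> \<le> 0"
  proof (intro sum_nonpos add_nonpos_nonpos)
    fix g h assume g: "g \<in> G" and h: "h \<in> G"
    show "np g * (g \<bullet> v) \<le> 0" using v_obtuse[OF g] by (simp add: np_def mult_nonneg_nonpos)
    show "np g * nm h * (g \<bullet> h) \<le> 0"
    proof (cases "g = h")
      case True thus ?thesis by (simp add: np_def nm_def max_def)
    next
      case False thus ?thesis
        using obtuse[OF g h] by (intro mult_nonneg_nonpos) (auto simp: np_def nm_def)
    qed
  qed
  finally have "vp = 0" by (metis inner_eq_zero_iff inner_ge_zero order_antisym)
  have "\<forall>g\<in>G. np g = 0"
  proof (rule ccontr)
    assume "\<not> (\<forall>g\<in>G. np g = 0)"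
    hence "dependent G"
      unfolding dependent_finite[OF fin] using \<open>vp = 0\<close> by (intro exI[of _ np]) (auto simp: vp_def)
    thus False using ind by simp
  qed
  hence "\<And>g. g \<in> G \<Longrightarrow> n g \<le> 0" by (metis np_def max.cobounded1)
  thus ?thesis using that n by blast
qed

lemma subspace_orthogonal_decomp:
  fixes x :: "'v::euclidean_space"
  assumes "subspace W"
  obtains p q where "p \<in> W" "\<And>w. w \<in> W \<Longrightarrow> w \<bullet> q = 0" "x = p + q" "norm p \<le> norm x"
proof -
  obtain p q where p: "p \<in> span W" and q: "\<And>w. w \<in> span W \<Longrightarrow> orthogonal q w" and x: "x = p + q"
    using orthogonal_subspace_decomp_exists[of W x] by blast
  have "orthogonal p q" using q[OF p] by (simp add: orthogonal_commute)
  hence "(norm x)\<^sup>2 = (norm p)\<^sup>2 + (norm q)\<^sup>2" unfolding x by (rule norm_add_Pythagorean)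
  hence "(norm p)\<^sup>2 \<le> (norm x)\<^sup>2" by simp
  hence norm_le: "norm p \<le> norm x" by (rule power2_le_imp_le) simp
  have pW: "p \<in> W" using p by (simp add: span_eq_iff[THEN iffD2, OF assms])
  have orth: "w \<bullet> q = 0" if "w \<in> W" for w
    using q[OF span_base[OF that]] by (simp add: orthogonal_def inner_commute)
  show ?thesis by (rule that[OF pW orth x norm_le])
qed

lemma exists_small_aff_avoiding:
  fixes S :: "'v::euclidean_space set"
  assumes S: "subspace S" and fin: "finite F" and transversal: "\<And>b. b \<in> F \<Longrightarrow> \<exists>s\<in>S. fst b \<bullet> s \<noteq> 0"
    and "\<epsilon> > 0"
  shows "\<exists>v\<in>S. norm v < \<epsilon> \<and> (\<forall>b\<in>F. aff b (y + v) \<noteq> 0)"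
  using fin transversal \<open>\<epsilon> > 0\<close>
proof (induction F arbitrary: \<epsilon> rule: finite_induct)
  case empty thus ?case using subspace_0[OF S] by (intro bexI[of _ 0]) auto
next
  case (insert b F)
  have "\<exists>v\<in>S. norm v < \<epsilon> / 2 \<and> (\<forall>b\<in>F. aff b (y + v) \<noteq> 0)"
    by (rule insert.IH) (use insert.prems in auto)
  then obtain v1 where v1: "v1 \<in> S" "norm v1 < \<epsilon> / 2" "\<forall>b\<in>F. aff b (y + v1) \<noteq> 0" by blast
  obtain \<delta> where \<delta>: "\<delta> > 0" "\<And>x b. dist x (y + v1) < \<delta> \<Longrightarrow> b \<in> F \<Longrightarrow> aff b x \<noteq> 0"
    using aff_nonzero_near[OF insert.hyps(1), of "y + v1"] v1(3) by blast
  show ?case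
  proof (cases "aff b (y + v1) = 0")
    case False thus ?thesis using v1 insert.prems by (intro bexI[OF _ v1(1)]) auto
  next
    case True
    obtain s where s: "s \<in> S" "fst b \<bullet> s \<noteq> 0" using insert.prems(1)[of b] by blast
    obtain t where t: "t > 0" "t * norm s < min \<delta> (\<epsilon> / 2)"
      using exists_pos_mult_norm_less[of "min \<delta> (\<epsilon> / 2)" s] \<delta>(1) insert.prems by auto
    define v where "v = v1 + t *\<^sub>R s"
    have "v \<in> S" using S v1(1) s(1) by (simp add: v_def subspace_add subspace_scale)
    moreover have "norm v < \<epsilon>"
      using norm_triangle_ineq[of v1 "t *\<^sub>R s"] v1(2) t by (simp add: v_def)
    moreover have "aff b (y + v) = t * (fst b \<bullet> s)"
      using True by (simp add: v_def aff_def inner_add_right algebra_simps)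
    hence "aff b (y + v) \<noteq> 0" using t s by simp
    moreover have "\<forall>b'\<in>F. aff b' (y + v) \<noteq> 0"
      using \<delta>(2)[of "y + v"] t by (simp add: v_def dist_norm)
    ultimately show ?thesis by auto
  qed
qed

lemma int_factor_of_4_bound:
  fixes m n :: int
  assumes "m * n = 4"
  shows "m \<in> {-4..4}"
proof -
  have "n \<noteq> 0" using assms by auto
  hence "\<bar>m\<bar> * 1 \<le> \<bar>m\<bar> * \<bar>n\<bar>" by (intro mult_left_mono) auto
  hence "\<bar>m\<bar> \<le> \<bar>m * n\<bar>" by (simp add: abs_mult)
  thus ?thesis using assms by auto
qed

lemma refl_pt_root_in_weyl_group: "a \<in> S \<Longrightarrow> refl_pt a \<in> weyl_group S"
  using weyl_group.weyl_step[OF weyl_group.weyl_id] by simp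

lemma affine_root_system_same_reflection:
  assumes ars: "affine_root_system UNIV Phi" and a: "a \<in> Phi" and b: "b \<in> Phi"
    and same: "refl_pt a = refl_pt b"
  shows "\<exists>k\<in>{-4..4::int}. a = (of_int k / 2) *\<^sub>R b"
proof -
  have nz: "fst c \<noteq> 0" if "c \<in> Phi" for c
    using ars that by (auto simp: affine_root_system_def grad_def)
  have ar3: "2 * (fst c \<bullet> fst c') / (fst c \<bullet> fst c) \<in> \<int>" if "c \<in> Phi" "c' \<in> Phi" for c c'
    using ars that by (auto simp: affine_root_system_def grad_def)
  \<comment> \<open>equal reflections have equal fixed hyperplanes, so a is a multiple l of b\<close>
  have "\<And>x. aff b x = 0 \<Longrightarrow> aff a x = 0"
    using refl_pt_fixed_iff[OF nz[OF a]] refl_pt_fixed_iff[OF nz[OF b]] same by metis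
  then obtain l where l: "\<And>x. aff a x = l * aff b x"
    using aff_proportional_if_zeros_subset[of UNIV b a] nz[OF b] by auto
  have "\<And>x. aff a x = (l *\<^sub>R fst b) \<bullet> x + l * snd b" using l by (simp add: aff_def algebra_simps)
  hence "a = (l *\<^sub>R fst b, l * snd b)" by (rule afun_eqI)
  hence a_eq: "a = l *\<^sub>R b" by (simp add: prod_eq_iff)
  have l0: "l \<noteq> 0" using nz[OF a] a_eq by auto
  have bb: "fst b \<bullet> fst b \<noteq> 0" using nz[OF b] by simp
  \<comment> \<open>integrality (AR3) in both directions: 2 l and 2 / l are integers\<close>
  have "2 * (fst b \<bullet> fst a) / (fst b \<bullet> fst b) = 2 * l" using bb a_eq by simp
  then obtain m where m: "2 * l = of_int m" using ar3[OF b a] Ints_cases by metis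
  have "2 * (fst a \<bullet> fst b) / (fst a \<bullet> fst a) = 2 / l" using bb a_eq l0 by (simp add: power2_eq_square)
  then obtain n where n: "2 / l = of_int n" using ar3[OF a b] Ints_cases by metis
  have "(2 * l) * (2 / l) = 4" using l0 by simp
  hence "of_int (m * n) = (4::real)" using m n by simp
  hence "m * n = 4" by linarith
  hence "m \<in> {-4..4}" by (rule int_factor_of_4_bound)
  moreover have "l = of_int m / 2" using m by simp
  ultimately show ?thesis using a_eq by blast
qed

lemma affine_root_system_finite_vanishing_on_compact:
  assumes ars: "affine_root_system UNIV Phi" and M: "compact M"
  shows "finite {b\<in>Phi. \<exists>x\<in>M. aff b x = 0}"
proof -
  define R where "R = {b\<in>Phi. \<exists>x\<in>M. aff b x = 0}"
  \<comment> \<open>the reflection in a root vanishing at x \<in> M fixes x, so AR4 bounds the reflections\<close>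
  have "refl_pt ` R \<subseteq> {w \<in> weyl_group Phi. w ` M \<inter> M \<noteq> {}}"
  proof
    fix w assume "w \<in> refl_pt ` R"
    then obtain b x where b: "b \<in> Phi" "x \<in> M" "aff b x = 0" "w = refl_pt b" by (auto simp: R_def)
    have "fst b \<noteq> 0" using ars b(1) by (auto simp: affine_root_system_def grad_def)
    hence "w x = x" using b refl_pt_fixed_iff by blast
    hence "x \<in> w ` M \<inter> M" using b(2) by (metis IntI image_eqI)
    thus "w \<in> {w \<in> weyl_group Phi. w ` M \<inter> M \<noteq> {}}" using b refl_pt_root_in_weyl_group by blast
  qed
  moreover have "finite {w \<in> weyl_group Phi. w ` M \<inter> M \<noteq> {}}"
    using ars M by (auto simp: affine_root_system_def)
  ultimately have fin_refl: "finite (refl_pt ` R)" by (rule finite_subset)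
  have fibre: "finite {b'\<in>Phi. refl_pt b' = w}" if w: "w \<in> refl_pt ` R" for w
  proof -
    obtain b where b: "b \<in> Phi" "w = refl_pt b" using w unfolding R_def by blast
    have "{b'\<in>Phi. refl_pt b' = w} \<subseteq> (\<lambda>k. (of_int k / 2) *\<^sub>R b) ` {-4..4::int}"
      using affine_root_system_same_reflection[OF ars _ b(1)] b(2) by fastforce
    thus ?thesis by (rule finite_subset) simp
  qed
  have "R \<subseteq> (\<Union>w\<in>refl_pt ` R. {b'\<in>Phi. refl_pt b' = w})" by (auto simp: R_def)
  moreover have "finite (\<Union>w\<in>refl_pt ` R. {b'\<in>Phi. refl_pt b' = w})"
    using fin_refl fibre by (rule finite_UN_I)
  ultimately show ?thesis unfolding R_def by (rule finite_subset)
qed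

lemma affine_root_system_hyperplanes_near_point:
  assumes ars: "affine_root_system UNIV Phi"
  obtains r where "r > 0" "\<And>b x. b \<in> Phi \<Longrightarrow> dist x y < r \<Longrightarrow> aff b x = 0 \<Longrightarrow> aff b y = 0"
proof -
  define F where "F = {b\<in>Phi. (\<exists>x\<in>cball y 1. aff b x = 0) \<and> aff b y \<noteq> 0}"
  have finF: "finite F"
    using affine_root_system_finite_vanishing_on_compact[OF ars compact_cball, of y 1]
    by (rule rev_finite_subset) (auto simp: F_def)
  have F_nonzero: "\<And>b. b \<in> F \<Longrightarrow> aff b y \<noteq> 0" by (simp add: F_def)
  obtain \<delta> where \<delta>: "\<delta> > 0" "\<And>x b. dist x y < \<delta> \<Longrightarrow> b \<in> F \<Longrightarrow> aff b x \<noteq> 0"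
    using aff_nonzero_near[OF finF F_nonzero] by blast
  show ?thesis
  proof (rule that[of "min \<delta> 1"])
    show "min \<delta> 1 > 0" using \<delta>(1) by simp
    fix b x assume "b \<in> Phi" "dist x y < min \<delta> 1" "aff b x = 0"
    moreover have "x \<in> cball y 1" using \<open>dist x y < min \<delta> 1\<close> by (simp add: dist_commute)
    ultimately have "b \<in> F \<or> aff b y = 0" unfolding F_def by blast
    thus "aff b y = 0" using \<delta>(2)[of x b] \<open>dist x y < min \<delta> 1\<close> \<open>aff b x = 0\<close> by auto
  qed
qed

lemma aff_pos_cone_eq: "{x. \<forall>a\<in>A. aff a x > 0} = (\<Inter>a\<in>A. {x. fst a \<bullet> x > - snd a})"
  by (force simp: aff_def)

lemma open_aff_pos_cone: "finite A \<Longrightarrow> open {x. \<forall>a\<in>A. aff a x > 0}"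
  unfolding aff_pos_cone_eq by (intro open_INT ballI open_halfspace_gt)

lemma convex_aff_pos_cone: "convex {x. \<forall>a\<in>A. aff a x > 0}"
  unfolding aff_pos_cone_eq by (intro convex_INT convex_halfspace_gt)

lemma is_wall_UNIV_if_open_piece:
  assumes "open T" "x \<in> T" "aff a x = 0" "hyp UNIV a \<inter> T \<subseteq> closure C"
  shows "is_wall UNIV a C"
proof -
  have H: "hyp UNIV a = {x. fst a \<bullet> x = - snd a}" by (auto simp: hyp_def aff_def)
  have aff_H: "affine (hyp UNIV a)" unfolding H by (rule affine_hyperplane)
  have "hyp UNIV a \<inter> T \<noteq> {}" using assms(2,3) by (auto simp: hyp_def)
  hence "hyp UNIV a = affine hull (hyp UNIV a \<inter> T)"
    using affine_hull_convex_Int_open[OF affine_imp_convex[OF aff_H] assms(1)]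
      hull_same[of affine, OF aff_H] by simp
  also have "\<dots> \<subseteq> affine hull (hyp UNIV a \<inter> closure C)" using assms(4) by (intro hull_mono) blast
  finally have "hyp UNIV a \<subseteq> affine hull (hyp UNIV a \<inter> closure C)" .
  moreover have "affine hull (hyp UNIV a \<inter> closure C) \<subseteq> hyp UNIV a"
    using aff_H by (intro hull_minimal) auto
  ultimately show ?thesis unfolding is_wall_def by blast
qed

lemma exists_near_aff_eq_scaled:
  fixes J :: "'v::euclidean_space afun set"
  assumes "inj_on grad J" "independent (grad ` J)" "\<And>a. a \<in> J \<Longrightarrow> aff a y = 0" "r > 0"
  obtains x s where "dist x y < r" "s > 0" "\<And>a. a \<in> J \<Longrightarrow> aff a x = s * c a"
proof -
  obtain u where u: "\<And>a. a \<in> J \<Longrightarrow> fst a \<bullet> u = c a"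
    using exists_inner_grad_eq[OF assms(1,2), where c = c] by blast
  obtain s where s: "s > 0" "s * norm u < r" using exists_pos_mult_norm_less[OF assms(4)] by blast
  show ?thesis
  proof (rule that[of "y + s *\<^sub>R u" s])
    show "dist (y + s *\<^sub>R u) y < r" using s by (simp add: dist_norm)
    fix a assume "a \<in> J"
    thus "aff a (y + s *\<^sub>R u) = s * c a"
      using assms(3) u by (simp add: aff_def inner_add_right algebra_simps)
  qed (rule s(1))
qed

lemma is_wall_of_cone_piece:
  fixes J :: "'v::euclidean_space afun set"
  assumes J: "inj_on grad J" "independent (grad ` J)" and a: "a \<in> J"
    and r: "r > 0" and y: "\<And>a. a \<in> J \<Longrightarrow> aff a y = 0"
    and cone: "ball y r \<inter> {x. \<forall>a\<in>J. aff a x > 0} \<subseteq> closure C"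
  shows "is_wall UNIV a C"
proof -
  have "finite J" using finiteI_independent[OF J(2)] J(1) finite_imageD by blast
  define T where "T = ball y r \<inter> {x. \<forall>a'\<in>J - {a}. aff a' x > 0}"
  have "open T" unfolding T_def using \<open>finite J\<close> by (intro open_Int open_ball open_aff_pos_cone) simp
  obtain x1 s1 where x1: "dist x1 y < r" "s1 > 0"
    "\<And>a'. a' \<in> J \<Longrightarrow> aff a' x1 = s1 * (if a' = a then 0 else 1)"
    using exists_near_aff_eq_scaled[OF J y r, where c = "\<lambda>a'. if a' = a then 0 else 1"] by blast
  have "x1 \<in> T" using x1 by (simp add: T_def dist_commute)
  \<comment> \<open>the cone piece is T cut by the open half-space of a, whose closure is the closed half-space\<close>
  have "fst a \<noteq> 0" using J(2) a dependent_zero[of "grad ` J"] by (force simp: grad_def)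
  moreover have "{x. aff a x > 0} = {x. fst a \<bullet> x > - snd a}" by (force simp: aff_def)
  ultimately have "closure {x. aff a x > 0} = {x. aff a x \<ge> 0}" by (force simp: aff_def)
  hence "hyp UNIV a \<inter> T \<subseteq> closure (T \<inter> {x. aff a x > 0})"
    using open_Int_closure_subset[OF \<open>open T\<close>] by (force simp: hyp_def)
  also have "T \<inter> {x. aff a x > 0} = ball y r \<inter> {x. \<forall>a\<in>J. aff a x > 0}"
    using a by (auto simp: T_def)
  also have "closure \<dots> \<subseteq> closure C" using closure_mono[OF cone] by simp
  finally show ?thesis
    using \<open>open T\<close> \<open>x1 \<in> T\<close> x1(3)[OF a] by (intro is_wall_UNIV_if_open_piece) auto
qed

lemma basis_containing_if_cone_avoids_roots:
  fixes Phi J :: "'v::euclidean_space afun set"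
  assumes J: "J \<subseteq> Phi" "inj_on grad J" "independent (grad ` J)"
    and indivisible: "\<And>a. a \<in> J \<Longrightarrow> (1/2) *\<^sub>R a \<notin> Phi"
    and r: "r > 0" and y: "\<And>a. a \<in> J \<Longrightarrow> aff a y = 0"
    and avoids: "\<And>x b. dist x y < r \<Longrightarrow> \<forall>a\<in>J. aff a x > 0 \<Longrightarrow> b \<in> Phi \<Longrightarrow> aff b x \<noteq> 0"
  shows "\<exists>B'. is_basis UNIV Phi B' \<and> J \<subseteq> B'"
proof -
  define Hc where "Hc = UNIV - (\<Union>b\<in>Phi. hyp UNIV b)"
  define U where "U = ball y r \<inter> {x. \<forall>a\<in>J. aff a x > 0}"
  have U_Hc: "U \<subseteq> Hc" using avoids by (auto simp: U_def Hc_def hyp_def dist_commute)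
  obtain x0 s0 where x0: "dist x0 y < r" "s0 > 0" "\<And>a. a \<in> J \<Longrightarrow> aff a x0 = s0 * 1"
    using exists_near_aff_eq_scaled[OF J(2,3) y r, where c = "\<lambda>_. 1"] by blast
  have x0U: "x0 \<in> U" using x0 by (simp add: U_def dist_commute)
  define C where "C = connected_component_set Hc x0"
  have C_alcove: "C \<in> alcoves UNIV Phi"
    unfolding C_def alcoves_def Hc_def[symmetric] using x0U U_Hc by (intro componentsI) blast
  have U_C: "U \<subseteq> C" unfolding C_def U_def
    using x0U U_Hc by (intro connected_component_maximal convex_connected convex_Int convex_ball
        convex_aff_pos_cone) (auto simp: U_def)
  have "a \<in> basis_of_alcove UNIV Phi C" if a: "a \<in> J" for a
  proof -
    have "aff a x > 0" if "x \<in> C" for x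
    proof (rule aff_pos_on_connected[of C x0])
      show "connected C" unfolding C_def by (rule connected_connected_component)
      show "x0 \<in> C" using x0U U_C by blast
      show "aff a x0 > 0" using x0 a by simp
      show "\<And>x. x \<in> C \<Longrightarrow> aff a x \<noteq> 0"
        using connected_component_subset[of Hc x0] a J(1) by (auto simp: C_def Hc_def hyp_def)
    qed (rule that)
    moreover have "is_wall UNIV a C"
      using is_wall_of_cone_piece[OF J(2,3) a r y subset_trans[OF U_C[unfolded U_def] closure_subset]] .
    ultimately show ?thesis using a J(1) indivisible by (auto simp: basis_of_alcove_def)
  qed
  thus ?thesis using C_alcove unfolding is_basis_def by blast
qed

locale subsystem_alcove =
  fixes Phi J :: "'v::euclidean_space afun set" and C :: "'v set" and y :: 'v
  assumes root_system: "affine_root_system UNIV Phi"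
    and J_subset: "J \<subseteq> Phi" and inj_grad: "inj_on grad J" and indep_grad: "independent (grad ` J)"
    and C_alcove: "C \<in> alcoves (sub_space J) (sub_system Phi J)"
    and J_basis: "J \<subseteq> basis_of_alcove (sub_space J) (sub_system Phi J) C"
    and y_in_sub_space: "y \<in> sub_space J" and aff_J_y: "\<And>a. a \<in> J \<Longrightarrow> aff a y = 0"
begin

abbreviation W where "W \<equiv> sub_space J"
abbreviation SJ where "SJ \<equiv> sub_system Phi J"

lemma subspace_W: "subspace W"
  by (simp add: sub_space_def)

lemma grad_J_in_W: "a \<in> J \<Longrightarrow> fst a \<in> W"
  by (simp add: sub_space_def grad_def span_base)

lemma SJ_iff: "b \<in> SJ \<longleftrightarrow> b \<in> Phi \<and> fst b \<in> W"
  by (simp add: sub_system_def sub_space_def grad_def)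

lemma J_in_SJ: "a \<in> J \<Longrightarrow> a \<in> SJ"
  using J_subset grad_J_in_W SJ_iff by blast

lemma root_grad_nonzero: "b \<in> Phi \<Longrightarrow> fst b \<noteq> 0"
  using root_system by (auto simp: affine_root_system_def grad_def)

lemma C_subset_W: "C \<subseteq> W"
  using C_alcove in_components_subset by (fastforce simp: alcoves_def)

lemma closure_C_subset_W: "closure C \<subseteq> W"
  using C_subset_W closed_subspace[OF subspace_W] closure_minimal by blast

lemma connected_C: "connected C"
  using C_alcove in_components_connected by (auto simp: alcoves_def)

lemma C_nonempty: "C \<noteq> {}"
  using C_alcove in_components_nonempty by (auto simp: alcoves_def)

lemma aff_nonzero_on_C: "x \<in> C \<Longrightarrow> b \<in> SJ \<Longrightarrow> aff b x \<noteq> 0"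
  using C_alcove in_components_subset by (fastforce simp: alcoves_def hyp_def)

lemma connected_subset_C:
  assumes "connected T" "T \<subseteq> W" "\<And>x b. x \<in> T \<Longrightarrow> b \<in> SJ \<Longrightarrow> aff b x \<noteq> 0" "z \<in> T" "z \<in> C"
  shows "T \<subseteq> C"
proof (rule components_maximal[OF C_alcove[unfolded alcoves_def] assms(1)])
  show "T \<subseteq> W - (\<Union>b\<in>SJ. hyp W b)" using assms(2,3) by (auto simp: hyp_def)
  show "C \<inter> T \<noteq> {}" using assms(4,5) by blast
qed

lemma J_wall: "a \<in> J \<Longrightarrow> is_wall W a C"
  using J_basis by (auto simp: basis_of_alcove_def)

lemma J_pos: "a \<in> J \<Longrightarrow> x \<in> C \<Longrightarrow> aff a x > 0"
  using J_basis by (auto simp: basis_of_alcove_def)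

lemma J_indivisible: "a \<in> J \<Longrightarrow> (1/2) *\<^sub>R a \<notin> SJ"
  using J_basis by (auto simp: basis_of_alcove_def)

lemma root_sign_on_C:
  assumes "b \<in> SJ"
  shows "(\<forall>x\<in>C. aff b x > 0) \<or> (\<forall>x\<in>C. aff b x < 0)"
proof (rule ccontr)
  assume "\<not> ?thesis"
  then obtain x1 x2 where "x1 \<in> C" "x2 \<in> C" "aff b x1 \<le> 0" "aff b x2 \<ge> 0" by force
  then obtain z where "z \<in> C" "aff b z = 0" using aff_zero_in_connected[OF connected_C] by metis
  thus False using aff_nonzero_on_C assms by blast
qed

lemma reflected_root:
  assumes "a \<in> SJ" "b \<in> SJ"
  obtains b' where "b' \<in> SJ" "\<And>x. aff b' x = aff b x - aff a x * (2 * (fst a \<bullet> fst b) / (fst a \<bullet> fst a))"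
proof -
  define k where "k = 2 * (fst a \<bullet> fst b) / (fst a \<bullet> fst a)"
  have "\<forall>a\<in>Phi. \<forall>b\<in>Phi. \<exists>b'\<in>Phi. \<forall>x. aff b' x = aff b (refl_pt a x)"
    using root_system by (simp add: affine_root_system_def)
  then obtain b' where b': "b' \<in> Phi" "\<And>x. aff b' x = aff b (refl_pt a x)"
    using assms SJ_iff by blast
  have "aff b' x = (fst b - k *\<^sub>R fst a) \<bullet> x + (snd b - k * snd a)" for x
  proof -
    have "aff b' x = aff b x - aff a x * k" by (simp add: b'(2) aff_refl_pt k_def)
    thus ?thesis by (simp add: aff_def inner_diff_left algebra_simps)
  qed
  hence "b' = (fst b - k *\<^sub>R fst a, snd b - k * snd a)" by (rule afun_eqI)
  hence "fst b' \<in> W" using assms SJ_iff subspace_W by (simp add: subspace_diff subspace_scale)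
  hence "b' \<in> SJ" using b'(1) SJ_iff by blast
  thus ?thesis using that b'(2) aff_refl_pt by metis
qed

lemma positive_root_same_zeros:
  assumes "b \<in> SJ"
  obtains b' where "b' \<in> SJ" "\<And>x. x \<in> C \<Longrightarrow> aff b' x > 0" "\<And>x. aff b' x = 0 \<longleftrightarrow> aff b x = 0"
proof (cases "\<forall>x\<in>C. aff b x > 0")
  case True thus ?thesis using that assms by blast
next
  case False
  hence neg: "\<forall>x\<in>C. aff b x < 0" using root_sign_on_C[OF assms] by blast
  obtain b' where b': "b' \<in> SJ" "\<And>x. aff b' x = aff b x - aff b x * (2 * (fst b \<bullet> fst b) / (fst b \<bullet> fst b))"
    using reflected_root[OF assms assms] by blast
  have "fst b \<bullet> fst b \<noteq> 0" using root_grad_nonzero assms SJ_iff by simp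
  hence "\<And>x. aff b' x = - aff b x" using b'(2) by simp
  thus ?thesis using that[OF b'(1)] neg by simp
qed

lemma inner_grad_nonpos_of_walls:
  assumes ab: "a \<in> SJ" "b \<in> SJ"
    and p: "p \<in> closure C" "aff a p = 0" "aff b p > 0"
    and q: "q \<in> closure C" "aff b q = 0" "aff a q > 0"
  shows "fst a \<bullet> fst b \<le> 0"
proof (rule ccontr)
  assume acute: "\<not> fst a \<bullet> fst b \<le> 0"
  define k where "k = 2 * (fst a \<bullet> fst b) / (fst a \<bullet> fst a)"
  have "k > 0" using acute root_grad_nonzero ab(1) SJ_iff by (simp add: k_def)
  obtain b' where b': "b' \<in> SJ" "\<And>x. aff b' x = aff b x - aff a x * k"
    using reflected_root[OF ab] unfolding k_def by blast
  \<comment> \<open>the reflected root s_a b takes both signs near the closure of C, hence vanishes in C\<close>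
  obtain x1 where x1: "x1 \<in> C" "aff b' x1 > 0"
    using exists_aff_pos_near_closure[OF p(1), of b'] b'(2) p(2,3) by auto
  obtain x2 where x2: "x2 \<in> C" "aff b' x2 < 0"
    using exists_aff_neg_near_closure[OF q(1), of b'] b'(2) q(2,3) \<open>k > 0\<close> by auto
  obtain z where "z \<in> C" "aff b' z = 0"
    using aff_zero_in_connected[OF connected_C x2(1) x1(1), of b'] x1(2) x2(2) by auto
  thus False using aff_nonzero_on_C b'(1) by blast
qed

lemma exists_wall_point:
  assumes a: "a \<in> J" and b_pos: "\<And>x. x \<in> C \<Longrightarrow> aff b x > 0"
    and not_subset: "\<not> hyp W a \<subseteq> hyp W b"
  obtains p where "p \<in> closure C" "aff a p = 0" "aff b p > 0"
proof -
  have "affine (hyp W b)"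
  proof -
    have "hyp W b = W \<inter> {x. fst b \<bullet> x = - snd b}" by (auto simp: hyp_def aff_def)
    thus ?thesis using affine_Int[OF subspace_imp_affine[OF subspace_W] affine_hyperplane] by metis
  qed
  moreover have "hyp W a = affine hull (hyp W a \<inter> closure C)"
    using J_wall[OF a] by (simp add: is_wall_def)
  ultimately have "\<not> hyp W a \<inter> closure C \<subseteq> hyp W b"
    using not_subset hull_minimal by metis
  then obtain p where "p \<in> closure C" "aff a p = 0" "aff b p \<noteq> 0" by (auto simp: hyp_def)
  moreover have "aff b p \<ge> 0" using aff_nonneg_on_closure b_pos \<open>p \<in> closure C\<close> by blast
  ultimately show ?thesis using that by force
qed

lemma J_obtuse:
  assumes a: "a \<in> J" and a': "a' \<in> J" and ne: "a \<noteq> a'"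
  shows "fst a \<bullet> fst a' \<le> 0"
proof -
  have not_subset: "\<not> hyp W c \<subseteq> hyp W c'" if c: "c \<in> J" "c' \<in> J" "c \<noteq> c'" for c c'
  proof -
    obtain u where u: "u \<in> W" "\<And>d. d \<in> J \<Longrightarrow> fst d \<bullet> u = (if d = c then 0 else 1)"
      using exists_inner_grad_eq[OF inj_grad indep_grad, where c = "\<lambda>d. if d = c then 0 else 1"]
      unfolding sub_space_def by blast
    have "y + u \<in> W" using y_in_sub_space u(1) subspace_W by (simp add: subspace_add)
    moreover have "aff c (y + u) = 0" "aff c' (y + u) = 1"
      using aff_J_y c u(2) by (simp_all add: aff_def inner_add_right)
    ultimately show ?thesis by (auto simp: hyp_def)
  qed
  obtain p where p: "p \<in> closure C" "aff a p = 0" "aff a' p > 0"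
    using exists_wall_point[OF a J_pos[OF a'] not_subset[OF a a' ne]] by blast
  obtain q where q: "q \<in> closure C" "aff a' q = 0" "aff a q > 0"
    using exists_wall_point[OF a' J_pos[OF a] not_subset[OF a' a ne[symmetric]]] by blast
  show ?thesis using inner_grad_nonpos_of_walls[OF J_in_SJ[OF a] J_in_SJ[OF a'] p q] .
qed

lemma aff_pos_at_vertex:
  assumes b: "b \<in> SJ" and b_pos: "\<And>x. x \<in> C \<Longrightarrow> aff b x > 0"
    and w: "w \<in> closure C" "aff b w = 0" "\<And>a. a \<in> J \<Longrightarrow> aff a w > 0"
  shows "aff b y > 0"
proof -
  have bW: "fst b \<in> W" using b SJ_iff by blast
  have obtuse: "fst a \<bullet> fst b \<le> 0" if a: "a \<in> J" for a
  proof -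
    have "\<not> hyp W a \<subseteq> hyp W b"
    proof
      assume "hyp W a \<subseteq> hyp W b"
      hence "\<And>x. x \<in> W \<Longrightarrow> aff a x = 0 \<Longrightarrow> aff b x = 0" by (auto simp: hyp_def)
      moreover have "fst a \<noteq> 0" using root_grad_nonzero a J_subset by blast
      ultimately obtain l where l: "\<And>x. x \<in> W \<Longrightarrow> aff b x = l * aff a x"
        using aff_proportional_if_zeros_subset[OF subspace_W grad_J_in_W[OF a] bW] by blast
      have "w \<in> W" using w(1) closure_C_subset_W by blast
      hence "l = 0" using l w(2) w(3)[OF a] by simp
      hence "fst b = 0" using grad_eq_0_if_aff_zero_on_subspace[OF subspace_W bW] l by simp
      thus False using root_grad_nonzero b SJ_iff by blast
    qed
    then obtain p where "p \<in> closure C" "aff a p = 0" "aff b p > 0"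
      using exists_wall_point[OF a b_pos] by blast
    thus ?thesis using inner_grad_nonpos_of_walls[OF J_in_SJ[OF a] b _ _ _ w(1,2) w(3)[OF a]] by blast
  qed
  \<comment> \<open>the gradients of J form an obtuse basis of W, so fst b is a nonpositive combination of them\<close>
  obtain n where n: "\<And>g. g \<in> grad ` J \<Longrightarrow> n g \<le> 0" "fst b = (\<Sum>g\<in>grad ` J. n g *\<^sub>R g)"
  proof (rule independent_obtuse_nonpos_coeffs[OF indep_grad])
    show "g \<bullet> h \<le> 0" if "g \<in> grad ` J" "h \<in> grad ` J" "g \<noteq> h" for g h
      using that J_obtuse by (auto simp: grad_def)
    show "fst b \<in> span (grad ` J)" using bW by (simp add: sub_space_def)
    show "g \<bullet> fst b \<le> 0" if "g \<in> grad ` J" for g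
      using that obtuse by (auto simp: grad_def)
  qed blast
  obtain z where z: "z \<in> C" using C_nonempty by blast
  have "aff b z - aff b y = fst b \<bullet> (z - y)" by (simp add: aff_def inner_diff_right)
  also have "\<dots> = (\<Sum>g\<in>grad ` J. n g * (g \<bullet> (z - y)))"
    unfolding n(2) by (simp only: inner_sum_left inner_scaleR_left)
  also have "\<dots> \<le> 0"
  proof (rule sum_nonpos)
    fix g assume "g \<in> grad ` J"
    then obtain a where a: "a \<in> J" "g = fst a" by (auto simp: grad_def)
    have "g \<bullet> (z - y) = aff a z" using aff_J_y[OF a(1)] a(2) by (simp add: aff_def inner_diff_right)
    thus "n g * (g \<bullet> (z - y)) \<le> 0"
      using n(1) \<open>g \<in> grad ` J\<close> J_pos[OF a(1) z] by (simp add: mult_nonpos_nonneg)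
  qed
  finally show ?thesis using b_pos[OF z] by linarith
qed

lemma segment_exit:
  assumes z: "z \<in> C" and z': "z' \<in> W" "z' \<notin> C"
  obtains b w where "b \<in> SJ" "\<And>x. x \<in> C \<Longrightarrow> aff b x > 0"
    "w \<in> closed_segment z z'" "w \<in> closure C" "aff b w = 0"
proof -
  define zz where "zz t = (1 - t) *\<^sub>R z + t *\<^sub>R z'" for t :: real
  have zz_W: "zz t \<in> W" for t
    using subspace_W z' C_subset_W z by (auto simp: zz_def intro!: subspace_add subspace_scale)
  have zz_seg: "zz t \<in> closed_segment z z'" if "t \<in> {0..1}" for t
    using that by (auto simp: zz_def closed_segment_def)
  have cont: "continuous_on S zz" for S unfolding zz_def by (intro continuous_intros)
  \<comment> \<open>the parameters where the segment meets a wall form a finite set, by local finiteness\<close>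
  define Ts where "Ts = {t\<in>{0..1}. \<exists>b\<in>SJ. aff b (zz t) = 0}"
  define F where "F = {b\<in>Phi. \<exists>x\<in>closed_segment z z'. aff b x = 0}"
  have "Ts \<subseteq> (\<lambda>b. aff b z / (aff b z - aff b z')) ` F"
  proof
    fix t assume "t \<in> Ts"
    then obtain b where t: "t \<in> {0..1}" "b \<in> SJ" "aff b (zz t) = 0" by (auto simp: Ts_def)
    hence "b \<in> F" using zz_seg SJ_iff by (auto simp: F_def)
    have "aff b z \<noteq> 0" using aff_nonzero_on_C z t(2) by blast
    moreover have eq: "aff b z = t * (aff b z - aff b z')"
      using t(3) unfolding zz_def aff_convex_comb by (simp add: algebra_simps)
    ultimately have "aff b z - aff b z' \<noteq> 0" by auto
    hence "t = aff b z / (aff b z - aff b z')" using eq by (simp add: eq_divide_eq)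
    thus "t \<in> (\<lambda>b. aff b z / (aff b z - aff b z')) ` F" using \<open>b \<in> F\<close> by blast
  qed
  moreover have "finite F"
    unfolding F_def by (rule affine_root_system_finite_vanishing_on_compact[OF root_system compact_segment])
  ultimately have "finite Ts" by (metis finite_imageI finite_subset)
  have into_C: "zz ` I \<subseteq> C" if "connected I" "0 \<in> I" "I \<subseteq> {0..1}" "I \<inter> Ts = {}" for I
  proof (rule connected_subset_C)
    show "connected (zz ` I)" using that(1) cont by (rule connected_continuous_image[rotated])
    show "zz ` I \<subseteq> W" using zz_W by blast
    fix x b assume "x \<in> zz ` I" "b \<in> SJ"
    then obtain t where "t \<in> I" "x = zz t" by blast
    hence "t \<in> {0..1}" "t \<notin> Ts" using that(3,4) by auto
    thus "aff b x \<noteq> 0" using \<open>b \<in> SJ\<close> \<open>x = zz t\<close> unfolding Ts_def by blast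
  next
    show "z \<in> zz ` I" using that(2) by (force simp: zz_def)
  qed (rule z)
  have "Ts \<noteq> {}"
  proof
    assume "Ts = {}"
    hence "zz ` {0..1} \<subseteq> C" by (intro into_C) auto
    moreover have "z' \<in> zz ` {0..1}" by (rule image_eqI[of _ _ 1]) (auto simp: zz_def)
    ultimately show False using z'(2) by blast
  qed
  define ts where "ts = Min Ts"
  have "ts \<in> Ts" using Min_in[OF \<open>finite Ts\<close> \<open>Ts \<noteq> {}\<close>] by (simp add: ts_def)
  then obtain b where ts: "ts \<in> {0..1}" and b: "b \<in> SJ" "aff b (zz ts) = 0" by (auto simp: Ts_def)
  have "ts \<noteq> 0"
  proof
    assume "ts = 0"
    hence "aff b z = 0" using b(2) by (simp add: zz_def)
    thus False using aff_nonzero_on_C[OF z b(1)] by blast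
  qed
  hence "ts > 0" using ts by simp
  have "s \<notin> Ts" if "s < ts" for s using that Min_le[OF \<open>finite Ts\<close>] ts_def by fastforce
  hence "zz ` {0..<ts} \<subseteq> C" using ts \<open>ts > 0\<close> by (intro into_C) auto
  hence "zz ` closure {0..<ts} \<subseteq> closure C"
    using closure_subset by (intro image_closure_subset[OF cont closed_closure]) blast
  moreover have "ts \<in> closure {0..<ts}" using \<open>ts > 0\<close> by simp
  ultimately have "zz ts \<in> closure C" by blast
  obtain b' where "b' \<in> SJ" "\<And>x. x \<in> C \<Longrightarrow> aff b' x > 0" "aff b' (zz ts) = 0"
    using positive_root_same_zeros[OF b(1)] b(2) by metis
  thus ?thesis using that zz_seg[OF ts] \<open>zz ts \<in> closure C\<close> by blast
qed

lemma segment_to_vertex_in_C: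
  assumes z: "z \<in> C" and t: "0 \<le> t" "t < 1"
  shows "(1 - t) *\<^sub>R z + t *\<^sub>R y \<in> C"
proof (rule ccontr)
  define zt where "zt = (1 - t) *\<^sub>R z + t *\<^sub>R y"
  assume "zt \<notin> C"
  moreover have "zt \<in> W"
    using subspace_W C_subset_W z y_in_sub_space by (auto simp: zt_def intro!: subspace_add subspace_scale)
  ultimately obtain b w where b: "b \<in> SJ" "\<And>x. x \<in> C \<Longrightarrow> aff b x > 0"
    and w: "w \<in> closed_segment z zt" "w \<in> closure C" "aff b w = 0"
    using segment_exit[OF z] by blast
  obtain s where s: "0 \<le> s" "s \<le> 1" "w = (1 - s) *\<^sub>R z + s *\<^sub>R zt"
    using w(1) by (auto simp: closed_segment_def)
  hence w_eq: "w = (1 - s * t) *\<^sub>R z + (s * t) *\<^sub>R y" by (simp add: zt_def algebra_simps)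
  have st: "0 \<le> s * t" "s * t < 1" using s t mult_right_mono[of s 1 t] by auto
  \<comment> \<open>w lies strictly before the vertex, so the roots of J are positive there\<close>
  have "aff a w > 0" if "a \<in> J" for a
    using J_pos[OF that z] aff_J_y[OF that] st by (simp add: w_eq aff_convex_comb)
  hence "aff b y > 0" using aff_pos_at_vertex[OF b w(2,3)] by blast
  hence "aff b w > 0" using b(2)[OF z] st by (simp add: w_eq aff_convex_comb add_pos_nonneg)
  thus False using w(3) by simp
qed

lemma vertex_in_closure_C: "y \<in> closure C"
proof -
  obtain z where z: "z \<in> C" using C_nonempty by blast
  define zz where "zz t = (1 - t) *\<^sub>R z + t *\<^sub>R y" for t :: real
  have "zz ` {0..<1} \<subseteq> C" using segment_to_vertex_in_C[OF z] by (auto simp: zz_def)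
  hence "zz ` closure {0..<1} \<subseteq> closure C"
    using closure_subset unfolding zz_def by (intro image_closure_subset continuous_intros) auto
  moreover have "1 \<in> closure {0..<(1::real)}" by simp
  moreover have "y = zz 1" by (simp add: zz_def)
  ultimately show ?thesis by blast
qed

lemma local_cone_avoids_SJ:
  obtains r where "r > 0"
    "\<And>x b. x \<in> W \<Longrightarrow> dist x y < r \<Longrightarrow> \<forall>a\<in>J. aff a x > 0 \<Longrightarrow> b \<in> SJ \<Longrightarrow> aff b x \<noteq> 0"
proof -
  obtain r where r: "r > 0" "\<And>b x. b \<in> Phi \<Longrightarrow> dist x y < r \<Longrightarrow> aff b x = 0 \<Longrightarrow> aff b y = 0"
    using affine_root_system_hyperplanes_near_point[OF root_system] by blast
  define U where "U = ball y r \<inter> {x. \<forall>a\<in>J. aff a x > 0}"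
  have "finite J" using finiteI_independent[OF indep_grad] inj_grad finite_imageD by blast
  hence "open U" "convex U" unfolding U_def
    by (auto intro: open_Int open_aff_pos_cone convex_Int convex_aff_pos_cone)
  have "y \<in> ball y r \<inter> closure C" using r(1) vertex_in_closure_C by simp
  then obtain z0 where z0: "z0 \<in> C" "z0 \<in> ball y r"
    using open_Int_closure_eq_empty[of "ball y r" C] by blast
  hence "z0 \<in> U" using J_pos by (auto simp: U_def)
  show ?thesis
  proof (rule that[OF r(1)], rule notI)
    fix x b assume x: "x \<in> W" "dist x y < r" "\<forall>a\<in>J. aff a x > 0" and b: "b \<in> SJ" "aff b x = 0"
    obtain b1 where b1: "b1 \<in> SJ" "\<And>x. x \<in> C \<Longrightarrow> aff b1 x > 0" "aff b1 x = 0"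
      using positive_root_same_zeros[OF b(1)] b(2) by metis
    have "x \<in> U" using x by (simp add: U_def dist_commute)
    then obtain e where e: "e > 0" "ball x e \<subseteq> U" using \<open>open U\<close> open_contains_ball by blast
    obtain s where s: "s > 0" "s * norm (fst b1) < e" using exists_pos_mult_norm_less[OF e(1)] by blast
    define x' where "x' = x - s *\<^sub>R fst b1"
    have "x' \<in> U" using e(2) s by (auto simp: x'_def dist_norm)
    have "x' \<in> W" using x(1) b1(1) SJ_iff subspace_W by (simp add: x'_def subspace_diff subspace_scale)
    have "aff b1 x' = - s * (fst b1 \<bullet> fst b1)" using b1(3) by (simp add: x'_def aff_def inner_diff_right)
    moreover have "fst b1 \<noteq> 0" using root_grad_nonzero b1(1) SJ_iff by blast
    ultimately have "aff b1 x' < 0" using s(1) by simp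
    hence "x' \<notin> C" using b1(2) by force
    then obtain b2 w where b2: "b2 \<in> SJ" "\<And>x. x \<in> C \<Longrightarrow> aff b2 x > 0"
      and w: "w \<in> closed_segment z0 x'" "w \<in> closure C" "aff b2 w = 0"
      using segment_exit[OF z0(1) \<open>x' \<in> W\<close>] by blast
    have "w \<in> U" using w(1) \<open>convex U\<close> \<open>z0 \<in> U\<close> \<open>x' \<in> U\<close> convex_contains_segment by blast
    hence "aff b2 y = 0" using r(2)[of b2 w] b2(1) SJ_iff w(3) by (simp add: U_def dist_commute)
    moreover have "aff b2 y > 0" using aff_pos_at_vertex[OF b2 w(2,3)] \<open>w \<in> U\<close> by (simp add: U_def)
    ultimately show False by simp
  qed
qed

lemma exists_orthogonal_vertex_shift:
  assumes "r > 0"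
  obtains v where "\<And>w. w \<in> W \<Longrightarrow> w \<bullet> v = 0" "norm v < r"
    "\<And>b. b \<in> Phi \<Longrightarrow> aff b (y + v) = 0 \<Longrightarrow> fst b \<in> W"
proof -
  define S where "S = {v. \<forall>w\<in>W. w \<bullet> v = 0}"
  have "subspace S" by (auto simp: subspace_def S_def inner_add_right)
  define N where "N = {b\<in>Phi. (\<exists>x\<in>cball y r. aff b x = 0) \<and> fst b \<notin> W}"
  have "finite N"
    using affine_root_system_finite_vanishing_on_compact[OF root_system compact_cball, of y r]
    by (rule rev_finite_subset) (auto simp: N_def)
  have transversal: "\<exists>s\<in>S. fst b \<bullet> s \<noteq> 0" if "b \<in> N" for b
  proof -
    obtain p q where pq: "p \<in> W" "\<And>w. w \<in> W \<Longrightarrow> w \<bullet> q = 0" "fst b = p + q"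
      using subspace_orthogonal_decomp[OF subspace_W, of "fst b"] by blast
    have "q \<noteq> 0" using pq(1,3) that by (auto simp: N_def)
    moreover have "fst b \<bullet> q = q \<bullet> q" using pq by (simp add: inner_add_left)
    ultimately show ?thesis using pq(2) by (intro bexI[of _ q]) (auto simp: S_def)
  qed
  obtain v where v: "v \<in> S" "norm v < r" "\<forall>b\<in>N. aff b (y + v) \<noteq> 0"
    using exists_small_aff_avoiding[OF \<open>subspace S\<close> \<open>finite N\<close> transversal assms, of y] by blast
  show ?thesis
  proof (rule that)
    show "\<And>w. w \<in> W \<Longrightarrow> w \<bullet> v = 0" using v(1) by (simp add: S_def)
    show "norm v < r" by (rule v(2))
    fix b assume "b \<in> Phi" "aff b (y + v) = 0"
    moreover have "y + v \<in> cball y r" using v(2) by (simp add: dist_norm)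
    ultimately show "fst b \<in> W" using v(3) unfolding N_def by blast
  qed
qed

lemma cone_near_shifted_vertex_avoids_roots:
  obtains y' r' where "r' > 0" "\<And>a. a \<in> J \<Longrightarrow> aff a y' = 0"
    "\<And>x b. dist x y' < r' \<Longrightarrow> \<forall>a\<in>J. aff a x > 0 \<Longrightarrow> b \<in> Phi \<Longrightarrow> aff b x \<noteq> 0"
proof -
  obtain r where r: "r > 0"
    "\<And>x b. x \<in> W \<Longrightarrow> dist x y < r \<Longrightarrow> \<forall>a\<in>J. aff a x > 0 \<Longrightarrow> b \<in> SJ \<Longrightarrow> aff b x \<noteq> 0"
    using local_cone_avoids_SJ by blast
  obtain v where v: "\<And>w. w \<in> W \<Longrightarrow> w \<bullet> v = 0" "norm v < r"
    "\<And>b. b \<in> Phi \<Longrightarrow> aff b (y + v) = 0 \<Longrightarrow> fst b \<in> W"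
    using exists_orthogonal_vertex_shift[OF r(1)] by blast
  obtain \<rho> where \<rho>: "\<rho> > 0" "\<And>b x. b \<in> Phi \<Longrightarrow> dist x (y + v) < \<rho> \<Longrightarrow> aff b x = 0 \<Longrightarrow> aff b (y + v) = 0"
    using affine_root_system_hyperplanes_near_point[OF root_system] by blast
  show ?thesis
  proof (rule that[of "min \<rho> (r - norm v)" "y + v"])
    show "min \<rho> (r - norm v) > 0" using \<rho>(1) v(2) by simp
    show "aff a (y + v) = 0" if "a \<in> J" for a
      using aff_J_y[OF that] v(1)[OF grad_J_in_W[OF that]] by (simp add: aff_def inner_add_right)
    fix x b assume x: "dist x (y + v) < min \<rho> (r - norm v)" "\<forall>a\<in>J. aff a x > 0" and b: "b \<in> Phi"
    show "aff b x \<noteq> 0"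
    proof
      assume "aff b x = 0"
      moreover have "dist x (y + v) < \<rho>" using x(1) by simp
      ultimately have "aff b (y + v) = 0" using \<rho>(2)[OF b] by blast
      hence "b \<in> SJ" using v(3)[OF b] SJ_iff b by blast
      \<comment> \<open>project x orthogonally to W through y: roots with gradient in W do not see the difference\<close>
      obtain p q where pq: "p \<in> W" "\<And>w. w \<in> W \<Longrightarrow> w \<bullet> q = 0" "x - (y + v) = p + q"
        "norm p \<le> norm (x - (y + v))"
        using subspace_orthogonal_decomp[OF subspace_W] by blast
      have same: "aff c (y + p) = aff c x" if "fst c \<in> W" for c
      proof -
        have "x = (y + p) + (v + q)" using pq(3) by (simp add: algebra_simps)
        thus ?thesis using v(1)[OF that] pq(2)[OF that] by (simp add: aff_def inner_add_right)
      qed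
      have "y + p \<in> W" using y_in_sub_space pq(1) subspace_W by (simp add: subspace_add)
      moreover have "dist (y + p) y < r"
      proof -
        have "norm (x - (y + v)) < r - norm v" using x(1) by (simp add: dist_norm)
        moreover have "dist (y + p) y = norm p" by (simp add: dist_norm)
        ultimately show ?thesis using pq(4) norm_ge_zero[of v] by linarith
      qed
      moreover have "\<forall>a\<in>J. aff a (y + p) > 0" using x(2) same grad_J_in_W by simp
      moreover have "aff b (y + p) = 0" using same \<open>b \<in> SJ\<close> SJ_iff \<open>aff b x = 0\<close> by simp
      ultimately show False using r(2) \<open>b \<in> SJ\<close> by blast
    qed
  qed
qed

lemma exists_basis_containing_J: "\<exists>B'. is_basis UNIV Phi B' \<and> J \<subseteq> B'"
proof (rule cone_near_shifted_vertex_avoids_roots)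
  have indivisible: "(1/2) *\<^sub>R a \<notin> Phi" if "a \<in> J" for a
    using J_indivisible[OF that] grad_J_in_W[OF that] subspace_W SJ_iff by (auto simp: subspace_scale)
  fix y' r' assume r': "r' > 0" and y': "\<And>a. a \<in> J \<Longrightarrow> aff a y' = 0"
    and avoids: "\<And>x b. dist x y' < r' \<Longrightarrow> \<forall>a\<in>J. aff a x > 0 \<Longrightarrow> b \<in> Phi \<Longrightarrow> aff b x \<noteq> 0"
  show ?thesis
    by (rule basis_containing_if_cone_avoids_roots[OF J_subset inj_grad indep_grad indivisible r' y' avoids])
qed

end

theorem lemmaA2:
  fixes Phi J :: "'v::euclidean_space afun set"
  assumes "affine_root_system UNIV Phi"
    and "J \<subseteq> Phi"
    and "inj_on grad J" and "independent (grad ` J)"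
    and "is_basis (sub_space J) (sub_system Phi J) BJ"
    and "J \<subseteq> BJ"
  shows "\<exists>B'. is_basis UNIV Phi B' \<and> J \<subseteq> B'"
proof -
  obtain C where C: "C \<in> alcoves (sub_space J) (sub_system Phi J)"
    "BJ = basis_of_alcove (sub_space J) (sub_system Phi J) C"
    using assms(5) unfolding is_basis_def by blast
  obtain y where y: "y \<in> sub_space J" "\<And>a. a \<in> J \<Longrightarrow> fst a \<bullet> y = - snd a"
    using exists_inner_grad_eq[OF assms(3,4), where c = "\<lambda>a. - snd a"] unfolding sub_space_def by blast
  interpret subsystem_alcove Phi J C y
    using assms C y by unfold_locales (auto simp: aff_def)
  show ?thesis by (rule exists_basis_containing_J)
qed

end
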